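(* Let $\kappa$ be an infinite limit cardinal. Then there exists a connected graph $G$ with $|V_G| = \kappa$ and chromatic number $\chi(G) = \kappa$ such that the complete graph $K_\kappa$ is not a minor of $G$.
   Context: A graph is a pair $G=(V,E)$ with $E \subseteq [V]^2$. $K_\kappa$ is the complete graph $(\kappa,[\kappa]^2)$. The chromatic number $\chi(G)$ is the least cardinal $\mu$ such that there is a map $c:V\to\mu$ with $c(u)\neq c(v)$ whenever $\{u,v\}\in E$. A graph $H$ is a minor of $G$ if there are pairwise disjoint non-empty sets $(X_u)_{u\in V_H}$ of vertices of $G$, each inducing a connected subgraph of $G$, such that for every edge $\{u,v\}$ of $H$ there are $x\in X_u$, $y\in X_v$ with $\{x,y\}$ an edge of $G$. *)

theory Defs
  imports Main
begin

definition graph :: "'a set \<Rightarrow> 'a set set \<Rightarrow> bool" where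
  "graph V E \<longleftrightarrow> E \<subseteq> {e. \<exists>u v. e = {u, v} \<and> u \<noteq> v \<and> u \<in> V \<and> v \<in> V}"

definition connected_on :: "'a set set \<Rightarrow> 'a set \<Rightarrow> bool" where
  "connected_on E X \<longleftrightarrow> X \<noteq> {} \<and>
     (\<forall>x\<in>X. \<forall>y\<in>X. (x, y) \<in> {(u, v). {u, v} \<in> E \<and> u \<in> X \<and> v \<in> X}\<^sup>*)"

definition proper_colouring :: "'a set \<Rightarrow> 'a set set \<Rightarrow> ('a \<Rightarrow> 'c) \<Rightarrow> 'c set \<Rightarrow> bool" where
  "proper_colouring V E c C \<longleftrightarrow> c ` V \<subseteq> C \<and> (\<forall>u v. {u, v} \<in> E \<longrightarrow> c u \<noteq> c v)"

definition chromatic_number_is :: "'a set \<Rightarrow> 'a set set \<Rightarrow> 'c set \<Rightarrow> bool" where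
  "chromatic_number_is V E K \<longleftrightarrow>
     (\<exists>c. proper_colouring V E c K) \<and>
     (\<forall>C :: 'c set. ordLess2 (card_of C) (card_of K) \<longrightarrow> \<not> (\<exists>c. proper_colouring V E c C))"

definition complete_edges :: "'b set \<Rightarrow> 'b set set" where
  "complete_edges K = {e. \<exists>u v. e = {u, v} \<and> u \<noteq> v \<and> u \<in> K \<and> v \<in> K}"

definition is_minor :: "'b set \<Rightarrow> 'b set set \<Rightarrow> 'a set \<Rightarrow> 'a set set \<Rightarrow> bool" where
  "is_minor VH EH VG EG \<longleftrightarrow> (\<exists>X :: 'b \<Rightarrow> 'a set.
     (\<forall>u\<in>VH. X u \<noteq> {} \<and> X u \<subseteq> VG \<and> connected_on EG (X u)) \<and>
     (\<forall>u\<in>VH. \<forall>v\<in>VH. u \<noteq> v \<longrightarrow> X u \<inter> X v = {}) \<and>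
     (\<forall>u v. {u, v} \<in> EH \<longrightarrow> (\<exists>x\<in>X u. \<exists>y\<in>X v. {x, y} \<in> EG)))"

end

theory Submission
  imports Defs
begin

(* Add an apex r joined to every other vertex and split the remaining vertices into disjoint
   cliques, one of size |underS a| for each a in K, where K carries its cardinal well-order.
   The apex makes the graph connected.  Since kappa is a limit cardinal, every cardinal below
   kappa is exceeded by the size of some clique, so fewer than kappa colours never suffice.
   In a K_kappa minor at most one branch set contains r; every other branch set is connected
   in G - r, hence lies in one clique, and any two of them are adjacent, hence lie in the same
   clique.  So kappa disjoint branch sets would fit into a clique of size below kappa. *)

notation
  ordLeq2 (infix \<open><=o\<close> 50) and
  ordLess2 (infix \<open><o\<close> 50) and
  ordIso2 (infix \<open>=o\<close> 50)

lemma card_of_Diff_singleton_infinite: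
  assumes "infinite A"
  shows "card_of (A - {a}) =o card_of A"
proof -
  obtain h where "bij_betw h A (A - {a})"
    using infinite_imp_bij_betw[OF assms] by blast
  thus ?thesis using card_of_ordIsoI ordIso_symmetric by blast
qed

lemma card_of_Sigma_underS:
  assumes "infinite K"
  shows "card_of (Sigma K (underS (card_of K))) =o card_of K"
proof -
  have "Sigma K (underS (card_of K)) \<subseteq> K \<times> K"
    using underS_Field[of _ "card_of K"] by (auto simp: Field_card_of)
  hence "card_of (Sigma K (underS (card_of K))) <=o card_of (K \<times> K)" by (rule card_of_mono1)
  hence le: "card_of (Sigma K (underS (card_of K))) <=o card_of K"
    using card_of_Times_same_infinite[OF assms] ordLeq_ordIso_trans by blast
  have "\<exists>b. b \<in> K \<and> a \<noteq> b \<and> (a, b) \<in> card_of K" if "a \<in> K" for a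
    using infinite_Card_order_limit[OF card_of_Card_order, of K a] assms that
    by (force simp: Field_card_of)
  then obtain g where g: "\<And>a. a \<in> K \<Longrightarrow> g a \<in> K \<and> a \<noteq> g a \<and> (a, g a) \<in> card_of K"
    by metis
  have "card_of K <=o card_of (Sigma K (underS (card_of K)))"
  proof (rule card_of_ordLeqI[where f = "\<lambda>a. (g a, a)"])
    show "inj_on (\<lambda>a. (g a, a)) K" by (auto simp: inj_on_def)
    show "(g a, a) \<in> Sigma K (underS (card_of K))" if "a \<in> K" for a
      using g[OF that] by (auto simp: underS_def)
  qed
  thus ?thesis using le ordIso_iff_ordLeq by blast
qed

lemma ordLess_card_of_ordIso_underS:
  assumes "card_of B <o card_of K"
  shows "\<exists>a\<in>K. card_of B =o card_of (underS (card_of K) a)"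
proof -
  have W: "Well_order (card_of K)" by (rule card_of_Well_order)
  obtain a where a: "a \<in> K" and iso: "card_of B =o Restr (card_of K) (underS (card_of K) a)"
    using ordLess_iff_ordIso_Restr[OF W card_of_Well_order[of B]] assms
    by (auto simp: Field_card_of)
  have "Field (Restr (card_of K) (underS (card_of K) a)) = underS (card_of K) a"
    using W wo_rel.underS_ofilter Field_Restr_ofilter unfolding wo_rel_def by fastforce
  hence "card_of B =o card_of (underS (card_of K) a)"
    using card_of_cong[OF iso] by (simp add: Field_card_of)
  thus ?thesis using a by blast
qed

lemma limit_card_of_ordLess_underS:
  assumes limit: "\<forall>A\<subseteq>K. card_of A <o card_of K \<longrightarrow>
      (\<exists>B\<subseteq>K. card_of A <o card_of B \<and> card_of B <o card_of K)"
    and "card_of C <o card_of K"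
  shows "\<exists>a\<in>K. card_of C <o card_of (underS (card_of K) a)"
proof -
  obtain A where A: "A < K" "card_of C =o card_of A" "card_of A <o card_of K"
    using assms(2) internalize_card_of_ordLess[of C "card_of K"] unfolding Field_card_of by blast
  obtain B :: "'a set" where B: "card_of A <o card_of B" "card_of B <o card_of K"
    using limit[rule_format, OF less_imp_le[OF A(1)] A(3)] by blast
  obtain a where "a \<in> K" and iso: "card_of B =o card_of (underS (card_of K) a)"
    using ordLess_card_of_ordIso_underS[OF B(2)] by blast
  thus ?thesis
    using ordIso_ordLess_trans[OF A(2) ordLess_ordIso_trans[OF B(1) iso]] by blast
qed

lemma card_of_fibre_bij_betw_Sigma:
  assumes f: "bij_betw f A (Sigma I B)" and "i \<in> I"
  shows "card_of {x \<in> A. fst (f x) = i} =o card_of (B i)"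
proof -
  have "bij_betw (snd \<circ> f) {x \<in> A. fst (f x) = i} (B i)"
  proof (rule bij_betw_imageI)
    have "f x = f y" if "fst (f x) = fst (f y)" "snd (f x) = snd (f y)" for x y
      using that by (simp add: prod_eq_iff)
    thus "inj_on (snd \<circ> f) {x \<in> A. fst (f x) = i}"
      using bij_betw_imp_inj_on[OF f] unfolding inj_on_def by auto
    have "snd (f x) \<in> B i" if "x \<in> A" "fst (f x) = i" for x
      using bij_betw_apply[OF f that(1)] that(2) by auto
    moreover have "b \<in> snd ` f ` {x \<in> A. fst (f x) = i}" if b: "b \<in> B i" for b
    proof -
      obtain x where "x \<in> A" "f x = (i, b)"
        using bij_betw_imp_surj_on[OF f] b \<open>i \<in> I\<close> by force
      thus ?thesis by force
    qed
    ultimately show "(snd \<circ> f) ` {x \<in> A. fst (f x) = i} = B i"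
      by (auto simp: image_comp[symmetric])
  qed
  thus ?thesis by (rule card_of_ordIsoI)
qed

definition clique :: "'a set set \<Rightarrow> 'a set \<Rightarrow> bool" where
  "clique E Q \<longleftrightarrow> (\<forall>u\<in>Q. \<forall>v\<in>Q. u \<noteq> v \<longrightarrow> {u, v} \<in> E)"

lemma proper_colouring_id:
  assumes "graph V E"
  shows "proper_colouring V E id V"
  using assms unfolding graph_def proper_colouring_def by (auto simp: doubleton_eq_iff)

lemma card_of_clique_ordLeq_colours:
  assumes c: "proper_colouring V E c C" and "clique E Q" and "Q \<subseteq> V"
  shows "card_of Q <=o card_of C"
proof (rule card_of_ordLeqI[where f = c])
  show "inj_on c Q"
    using assms unfolding inj_on_def clique_def proper_colouring_def by metis
  show "c v \<in> C" if "v \<in> Q" for v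
    using c that \<open>Q \<subseteq> V\<close> unfolding proper_colouring_def by blast
qed

lemma chromatic_number_is_selfI:
  fixes V :: "'a set"
  assumes "graph V E"
    and large_cliques:
      "\<And>C :: 'a set. card_of C <o card_of V \<Longrightarrow> \<exists>Q\<subseteq>V. clique E Q \<and> card_of C <o card_of Q"
  shows "chromatic_number_is V E V"
  unfolding chromatic_number_is_def
proof (intro conjI allI impI notI)
  show "\<exists>c. proper_colouring V E c V"
    using proper_colouring_id[OF assms(1)] by blast
next
  fix C :: "'a set"
  assume "card_of C <o card_of V" and "\<exists>c. proper_colouring V E c C"
  then obtain Q c where "Q \<subseteq> V" "clique E Q" "card_of C <o card_of Q" "proper_colouring V E c C"
    using large_cliques by blast
  thus False
    using card_of_clique_ordLeq_colours not_ordLess_ordLeq by blast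
qed

definition cone_of_cliques :: "'a \<Rightarrow> ('a \<Rightarrow> 'b) \<Rightarrow> 'a set \<Rightarrow> 'a set set" where
  "cone_of_cliques r cl V =
     {{r, v} | v. v \<in> V \<and> v \<noteq> r} \<union>
     {{u, v} | u v. u \<in> V - {r} \<and> v \<in> V - {r} \<and> u \<noteq> v \<and> cl u = cl v}"

lemma cone_of_cliques_edgeD:
  assumes "{x, y} \<in> cone_of_cliques r cl V" and "r \<in> V"
  shows "x \<noteq> y \<and> x \<in> V \<and> y \<in> V \<and> (x = r \<or> y = r \<or> cl x = cl y)"
  using assms unfolding cone_of_cliques_def by (auto simp: doubleton_eq_iff)

lemma graph_cone_of_cliques: "r \<in> V \<Longrightarrow> graph V (cone_of_cliques r cl V)"
  unfolding graph_def cone_of_cliques_def by auto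

lemma clique_cone_of_cliques_fibre:
  "clique (cone_of_cliques r cl V) {v \<in> V - {r}. cl v = a}"
  unfolding clique_def cone_of_cliques_def by blast

lemma connected_on_cone_of_cliques:
  assumes r: "r \<in> V"
  shows "connected_on (cone_of_cliques r cl V) V"
proof -
  let ?step = "{(u, v). {u, v} \<in> cone_of_cliques r cl V \<and> u \<in> V \<and> v \<in> V}"
  have to_apex: "(x, r) \<in> ?step\<^sup>*" and from_apex: "(r, x) \<in> ?step\<^sup>*" if "x \<in> V" for x
  proof -
    have "x = r \<or> ((x, r) \<in> ?step \<and> (r, x) \<in> ?step)"
      using that r unfolding cone_of_cliques_def by (auto simp: insert_commute)
    thus "(x, r) \<in> ?step\<^sup>*" "(r, x) \<in> ?step\<^sup>*" by auto
  qed
  show ?thesis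
    unfolding connected_on_def
  proof (intro conjI ballI)
    show "V \<noteq> {}" using r by blast
    fix x y assume "x \<in> V" "y \<in> V"
    show "(x, y) \<in> ?step\<^sup>*"
      using to_apex[OF \<open>x \<in> V\<close>] from_apex[OF \<open>y \<in> V\<close>] by (rule rtrancl_trans)
  qed
qed

lemma connected_on_cone_of_cliques_same_fibre:
  assumes conn: "connected_on (cone_of_cliques r cl V) X" and "r \<notin> X" "r \<in> V"
    and "x \<in> X" "y \<in> X"
  shows "cl x = cl y"
proof -
  let ?step = "{(u, v). {u, v} \<in> cone_of_cliques r cl V \<and> u \<in> X \<and> v \<in> X}"
  have "(x, y) \<in> ?step\<^sup>*"
    using conn \<open>x \<in> X\<close> \<open>y \<in> X\<close> unfolding connected_on_def by blast
  thus ?thesis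
  proof (induction rule: rtrancl_induct)
    case (step u v)
    thus ?case using cone_of_cliques_edgeD[of u v r cl V] \<open>r \<notin> X\<close> \<open>r \<in> V\<close> by auto
  qed simp
qed

lemma card_of_disjoint_family_avoiding:
  assumes "infinite W" and disj: "\<forall>u\<in>W. \<forall>v\<in>W. u \<noteq> v \<longrightarrow> X u \<inter> X v = {}"
  shows "card_of W <=o card_of {u \<in> W. r \<notin> X u}"
proof (cases "\<exists>u\<in>W. r \<in> X u")
  case True
  then obtain u where "u \<in> W" "r \<in> X u" by blast
  hence "card_of (W - {u}) <=o card_of {u \<in> W. r \<notin> X u}"
    using disj by (intro card_of_mono1) blast
  thus ?thesis
    using ordIso_symmetric[OF card_of_Diff_singleton_infinite[OF \<open>infinite W\<close>]]
    by (rule ordIso_ordLeq_trans[rotated])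
next
  case False
  thus ?thesis by (intro card_of_mono1) blast
qed

lemma card_of_ordLeq_disjoint_family:
  assumes disj: "\<forall>u\<in>U. \<forall>v\<in>U. u \<noteq> v \<longrightarrow> X u \<inter> X v = {}"
    and meets: "\<forall>u\<in>U. X u \<inter> S \<noteq> {}"
  shows "card_of U <=o card_of S"
proof -
  have "\<forall>u\<in>U. \<exists>x. x \<in> X u \<inter> S" using meets by blast
  then obtain p where p: "\<And>u. u \<in> U \<Longrightarrow> p u \<in> X u \<inter> S" by (metis bchoice)
  show ?thesis
  proof (rule card_of_ordLeqI[where f = p])
    show "inj_on p U"
    proof (rule inj_onI)
      fix u v assume "u \<in> U" "v \<in> U" "p u = p v"
      hence "p u \<in> X u \<inter> X v" using p by (metis IntE IntI)
      thus "u = v" using disj \<open>u \<in> U\<close> \<open>v \<in> U\<close> by blast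
    qed
    show "p u \<in> S" if "u \<in> U" for u using p[OF that] by blast
  qed
qed

lemma complete_minor_of_cone_of_cliques:
  assumes "r \<in> V" and "infinite W"
    and "is_minor W (complete_edges W) V (cone_of_cliques r cl V)"
  shows "\<exists>v\<in>V - {r}. card_of W <=o card_of {u \<in> V - {r}. cl u = cl v}"
proof -
  let ?E = "cone_of_cliques r cl V"
  obtain X where X: "\<forall>u\<in>W. X u \<noteq> {} \<and> X u \<subseteq> V \<and> connected_on ?E (X u)"
    and disj: "\<forall>u\<in>W. \<forall>v\<in>W. u \<noteq> v \<longrightarrow> X u \<inter> X v = {}"
    and adj: "\<forall>u v. {u, v} \<in> complete_edges W \<longrightarrow> (\<exists>x\<in>X u. \<exists>y\<in>X v. {x, y} \<in> ?E)"
    using assms(3) unfolding is_minor_def by blast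
  define U where "U = {u \<in> W. r \<notin> X u}"
  have U_large: "card_of W <=o card_of U"
    unfolding U_def using card_of_disjoint_family_avoiding[OF \<open>infinite W\<close> disj] .
  have "infinite U" using card_of_ordLeq_infinite[OF U_large \<open>infinite W\<close>] .
  then obtain u1 where u1: "u1 \<in> U" by (metis infinite_imp_nonempty ex_in_conv)
  have U_W: "U \<subseteq> W" unfolding U_def by blast
  have X_U: "X u \<subseteq> V - {r}" if "u \<in> U" for u using that X unfolding U_def by blast
  obtain y1 where y1: "y1 \<in> X u1" using X u1 U_W by blast
  have same_fibre: "cl x = cl x'" if "u \<in> U" "x \<in> X u" "x' \<in> X u" for u x x'
    using connected_on_cone_of_cliques_same_fibre[OF _ _ \<open>r \<in> V\<close> that(2,3)] X that U_W
    unfolding U_def by blast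
  have in_fibre: "X u \<subseteq> {v \<in> V - {r}. cl v = cl y1}" if "u \<in> U" for u
  proof
    fix x assume x: "x \<in> X u"
    have "cl x = cl y1"
    proof (cases "u = u1")
      case False
      hence "{u, u1} \<in> complete_edges W"
        using that u1 U_W unfolding complete_edges_def by blast
      then obtain x' y where xy: "x' \<in> X u" "y \<in> X u1" "{x', y} \<in> ?E" using adj by blast
      hence "cl x' = cl y"
        using cone_of_cliques_edgeD[OF xy(3) \<open>r \<in> V\<close>] X_U[OF that] X_U[OF u1] by blast
      thus ?thesis using same_fibre[OF that x xy(1)] same_fibre[OF u1 xy(2) y1] by simp
    qed (use same_fibre x y1 that in blast)
    thus "x \<in> {v \<in> V - {r}. cl v = cl y1}" using x X_U[OF that] by blast
  qed
  have "card_of U <=o card_of {v \<in> V - {r}. cl v = cl y1}"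
  proof (rule card_of_ordLeq_disjoint_family)
    show "\<forall>u\<in>U. \<forall>v\<in>U. u \<noteq> v \<longrightarrow> X u \<inter> X v = {}" using disj U_W by blast
    show "\<forall>u\<in>U. X u \<inter> {v \<in> V - {r}. cl v = cl y1} \<noteq> {}"
      using in_fibre X U_W by fast
  qed
  hence "card_of W <=o card_of {v \<in> V - {r}. cl v = cl y1}"
    by (rule ordLeq_transitive[OF U_large])
  moreover have "y1 \<in> V - {r}" using y1 X_U[OF u1] by blast
  ultimately show ?thesis by blast
qed

lemma chromatic_number_is_cone_of_cliques:
  fixes V :: "'a set"
  assumes r: "r \<in> V"
    and large_fibres:
      "\<And>C :: 'a set. card_of C <o card_of V \<Longrightarrow> \<exists>a. card_of C <o card_of {v \<in> V - {r}. cl v = a}"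
  shows "chromatic_number_is V (cone_of_cliques r cl V) V"
proof (rule chromatic_number_is_selfI[OF graph_cone_of_cliques[OF r]])
  fix C :: "'a set" assume "card_of C <o card_of V"
  then obtain a where a: "card_of C <o card_of {v \<in> V - {r}. cl v = a}"
    using large_fibres by blast
  show "\<exists>Q\<subseteq>V. clique (cone_of_cliques r cl V) Q \<and> card_of C <o card_of Q"
  proof (intro exI conjI)
    show "{v \<in> V - {r}. cl v = a} \<subseteq> V" by blast
  qed (rule clique_cone_of_cliques_fibre, rule a)
qed

lemma not_complete_minor_cone_of_cliques:
  assumes r: "r \<in> V" and "infinite V"
    and small_fibres: "\<forall>v\<in>V - {r}. card_of {u \<in> V - {r}. cl u = cl v} <o card_of V"
  shows "\<not> is_minor V (complete_edges V) V (cone_of_cliques r cl V)"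
proof
  assume "is_minor V (complete_edges V) V (cone_of_cliques r cl V)"
  then obtain v where v: "v \<in> V - {r}"
    and "card_of V <=o card_of {u \<in> V - {r}. cl u = cl v}"
    using complete_minor_of_cone_of_cliques[OF r \<open>infinite V\<close>] by blast
  thus False using not_ordLess_ordLeq[OF small_fibres[rule_format, OF v]] by blast
qed

theorem mainTheorem1:
  fixes K :: "'a set"
  assumes "infinite K"
    and "\<forall>A\<subseteq>K. ordLess2 (card_of A) (card_of K) \<longrightarrow>
           (\<exists>B\<subseteq>K. ordLess2 (card_of A) (card_of B) \<and> ordLess2 (card_of B) (card_of K))"
  shows "\<exists>E. graph K E \<and> connected_on E K \<and> chromatic_number_is K E K \<and>
             \<not> is_minor K (complete_edges K) K E"
proof -
  obtain r where r: "r \<in> K" using \<open>infinite K\<close> by (metis infinite_imp_nonempty ex_in_conv)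
  have "card_of (K - {r}) =o card_of (Sigma K (underS (card_of K)))"
    by (rule ordIso_transitive[OF card_of_Diff_singleton_infinite[OF \<open>infinite K\<close>]
          ordIso_symmetric[OF card_of_Sigma_underS[OF \<open>infinite K\<close>]]])
  then obtain f where f: "bij_betw f (K - {r}) (Sigma K (underS (card_of K)))"
    unfolding card_of_ordIso[symmetric] by blast
  define cl where "cl = fst \<circ> f"
  have fibre_size: "card_of {v \<in> K - {r}. cl v = a} =o card_of (underS (card_of K) a)"
    if "a \<in> K" for a
    using card_of_fibre_bij_betw_Sigma[OF f that] unfolding cl_def by simp
  have "card_of {u \<in> K - {r}. cl u = cl v} <o card_of K" if "v \<in> K - {r}" for v
  proof -
    have "cl v \<in> K" using bij_betw_apply[OF f that] unfolding cl_def by auto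
    thus ?thesis using ordIso_ordLess_trans[OF fibre_size card_of_underS[OF card_of_Card_order]]
      by (simp add: Field_card_of)
  qed
  moreover have "\<exists>a. card_of C <o card_of {v \<in> K - {r}. cl v = a}"
    if C: "card_of C <o card_of K" for C :: "'a set"
  proof -
    obtain a where a: "a \<in> K" and "card_of C <o card_of (underS (card_of K) a)"
      using limit_card_of_ordLess_underS[OF assms(2) C] by blast
    thus ?thesis using ordLess_ordIso_trans[OF _ ordIso_symmetric[OF fibre_size[OF a]]] by blast
  qed
  ultimately show ?thesis
    using graph_cone_of_cliques[OF r] connected_on_cone_of_cliques[OF r]
      chromatic_number_is_cone_of_cliques[OF r] not_complete_minor_cone_of_cliques[OF r \<open>infinite K\<close>]
    by blast
qed

end
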